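(* Fix positive reals $d_{close}<d_{min}\le d_{max}$ and $d_{open}>0$. (1) For every real $c$ with $0\le c<d_{open}$ there exist a regular run $R$ (with a single track) and reals $0\le\alpha<\beta$ with $\alpha+c<\beta-\Delta_{close}$ such that TrackStatus$(x)\ne$ incrossing over $(\alpha,\beta)$ for every track $x$, but GateStatus $\neq$ opened at some moment of $[\alpha+c,\,\beta-\Delta_{close}]$. (2) For every real $C<\Delta_{close}$ there exist a regular run $R$ (with a single track) and reals $0\le\alpha<\beta$ with $\alpha+d_{open}<\beta-C$ such that TrackStatus$(x)\ne$ incrossing over $(\alpha,\beta)$ for every track $x$, but GateStatus $\neq$ opened at some moment of $[\alpha+d_{open},\,\beta-C]$.
   Context: Setting (evolving algebra for the railroad crossing). States are structures over a vocabulary containing: a finite universe Tracks; the reals and ExtendedReals $=\mathbb{R}\cup\{\infty\}$ with standard $<$ and $+$ ($\infty$ largest); a nullary real-valued symbol $\mathrm{CT}$ (current time); positive real constants $d_{close},d_{open},d_{min},d_{max}$ with $d_{close}<d_{min}\le d_{max}$; a unary function TrackStatus from Tracks to $\{\text{empty},\text{coming},\text{incrossing}\}$; a unary function Deadline from Tracks to ExtendedReals; a nullary Dir with values in $\{\text{open},\text{close}\}$; a nullary GateStatus with values in $\{\text{opened},\text{closed}\}$. Put $W=d_{min}-d_{close}$ and $\Delta_{close}=d_{close}+(d_{max}-d_{min})=d_{max}-W$. For a track $x$, $s(x)$ is the condition [$\mathrm{TrackStatus}(x)=\text{empty}$ or $\mathrm{CT}+d_{open}<\mathrm{Deadline}(x)$],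 and SafeToOpen is $\forall x\in\mathrm{Tracks}\ s(x)$. The program has two modules (agents). Gate: simultaneously OpenGate "if Dir=open then GateStatus:=opened" and CloseGate "if Dir=close then GateStatus:=closed". Controller: simultaneously, for every track $x$, SetDeadline$(x)$ "if TrackStatus$(x)$=coming and Deadline$(x)=\infty$ then Deadline$(x):=\mathrm{CT}+W$", SignalClose$(x)$ "if $\mathrm{CT}=$Deadline$(x)$ then Dir:=close", ClearDeadline$(x)$ "if TrackStatus$(x)$=empty and Deadline$(x)<\infty$ then Deadline$(x):=\infty$", together with SignalOpen "if Dir=close and SafeToOpen then Dir:=open". Executing a module means computing all updates it generates in the current state and performing them simultaneously (nothing happens if the update set is inconsistent). A module is enabled at a state if its update set is consistent and contains an update that changes the state. TrackStatus is external (changed only by the environment); Deadline, Dir, GateStatus are internal (changed only by the modules); other symbols are static. Runs: for $t\mapsto R(t)$, $t\in[0,\infty)$, let $\rho(t)$ be the reduct of $R(t)$ without CT. $R$ is a pre-run if all $R(t)$ share a superuniverse, $\mathrm{CT}=t$ in $R(t)$, and for every $\tau>0$ there are $0=t_0<\dots<t_n=\tau$ with $\rho$ constant on each $(t_i,t_{i+1})$. For a term $e$ (free variables fixed), $e_t$ is its value in $R(t)$, $e_{t+}$ (resp. $e_{t-}$, $t>0$) its constant value on some $(t,t+\epsilon)$ (resp. $(t-\epsilon,t)$); likewise $\rho(t\pm)$. $e$ holds over an interval if it holds at each point; $e$ becomes (is set to) $a$ at $t$ if $e_{t-}\ne a=e_t$ or $e_t\neq a=e_{t+}$. A pre-run is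 a run if (i) whenever $\rho(t+)\neq\rho(t)$, $\rho(t+)$ is the CT-free reduct of the result of executing some modules at $R(t)$ (these agents fire at $t$), with external functions equal in $\rho(t)$ and $\rho(t+)$; (ii) whenever $t>0$ and $\rho(t)\ne\rho(t-)$, they differ only in external functions. An agent is immediate if it fires at every moment it is enabled; bounded if immediate or there is $b>0$ with no interval $(t,t+b)$ over which it is enabled but never fires. Initial states: TrackStatus$(x)$=empty and Deadline$(x)=\infty$ for every track $x$. A regular run is a run $R$ with $R(0)$ initial such that: (Train Motion) for each track $x$ there is a finite or infinite sequence $0=t_0<t_1<t_2<\cdots$ (the significant moments of $x$) with TrackStatus$(x)$=empty over each $[t_{3i},t_{3i+1})$, =coming over each $[t_{3i+1},t_{3i+2})$ where $d_{min}\le t_{3i+2}-t_{3i+1}\le d_{max}$, =incrossing over each $[t_{3i+2},t_{3i+3})$, and, if the sequence is finite with last element $t_k$, then $3\mid k$ and TrackStatus$(x)$=empty over $[t_k,\infty)$; (Controller Timing) Controller is immediate; (Gate Timing) Gate is bounded, there is no interval $(t,t+d_{close})$ over which Dir=close and GateStatus=opened both hold, and no interval $(t,t+d_{open})$ over which Dir=open and GateStatus=closed both hold. *)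

theory Defs
  imports Complex_Main "HOL-Library.Extended_Real"
begin

datatype tstatus = Empty | Coming | Incrossing
datatype dirv = DOpen | DClose
datatype gstatus = Opened | Closed

text \<open>CT-free reduct of a state (the dynamic part). Tracks are the elements of the
  (finite) type 'tr; static symbols (reals, the constants d_close, ... ) are parameters.
  ExtendedReals are rendered by ereal (the value minus infinity never arises).\<close>
record 'tr st =
  TS   :: "'tr \<Rightarrow> tstatus"
  DL   :: "'tr \<Rightarrow> ereal"
  Dir  :: dirv
  Gate :: gstatus

datatype 'tr upd = UDL 'tr ereal | UDir dirv | UGate gstatus

datatype agent = GateA | ControllerA

definition consistent :: "'tr upd set \<Rightarrow> bool" where
  "consistent U \<longleftrightarrow>
     (\<forall>x v w. UDL x v \<in> U \<and> UDL x w \<in> U \<longrightarrow> v = w) \<and>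
     (\<forall>v w. UDir v \<in> U \<and> UDir w \<in> U \<longrightarrow> v = w) \<and>
     (\<forall>v w. UGate v \<in> U \<and> UGate w \<in> U \<longrightarrow> v = w)"

definition apply_upds :: "'tr upd set \<Rightarrow> 'tr st \<Rightarrow> 'tr st" where
  "apply_upds U s = s\<lparr>
     DL := (\<lambda>x. if \<exists>v. UDL x v \<in> U then (SOME v. UDL x v \<in> U) else DL s x),
     Dir := (if \<exists>v. UDir v \<in> U then (SOME v. UDir v \<in> U) else Dir s),
     Gate := (if \<exists>v. UGate v \<in> U then (SOME v. UGate v \<in> U) else Gate s)\<rparr>"

definition changes :: "'tr st \<Rightarrow> 'tr upd \<Rightarrow> bool" where
  "changes s u = (case u of UDL x v \<Rightarrow> DL s x \<noteq> v | UDir v \<Rightarrow> Dir s \<noteq> v | UGate v \<Rightarrow> Gate s \<noteq> v)"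

definition safe_to_open :: "real \<Rightarrow> real \<Rightarrow> 'tr st \<Rightarrow> bool" where
  "safe_to_open d_open ct s \<longleftrightarrow>
     (\<forall>x. TS s x = Empty \<or> ereal (ct + d_open) < DL s x)"

definition gate_upds :: "'tr st \<Rightarrow> 'tr upd set" where
  "gate_upds s = (if Dir s = DOpen then {UGate Opened} else {})
               \<union> (if Dir s = DClose then {UGate Closed} else {})"

text \<open>Update set of the Controller; W = d_min - d_close; ct is the value of CT.\<close>
definition controller_upds :: "real \<Rightarrow> real \<Rightarrow> real \<Rightarrow> real \<Rightarrow> 'tr st \<Rightarrow> 'tr upd set" where
  "controller_upds d_close d_open d_min ct s =
      {UDL x (ereal (ct + (d_min - d_close))) | x. TS s x = Coming \<and> DL s x = \<infinity>}
    \<union> {UDir DClose | x. ereal ct = DL s x}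
    \<union> {UDL x \<infinity> | x. TS s x = Empty \<and> DL s x < \<infinity>}
    \<union> (if Dir s = DClose \<and> safe_to_open d_open ct s then {UDir DOpen} else {})"

definition module_upds :: "real \<Rightarrow> real \<Rightarrow> real \<Rightarrow> agent \<Rightarrow> real \<Rightarrow> 'tr st \<Rightarrow> 'tr upd set" where
  "module_upds d_close d_open d_min a ct s =
     (case a of GateA \<Rightarrow> gate_upds s | ControllerA \<Rightarrow> controller_upds d_close d_open d_min ct s)"

text \<open>Executing the set A of modules at the state with CT = ct: each module whose
  update set is consistent performs its updates (modules write disjoint locations).\<close>
definition exec :: "real \<Rightarrow> real \<Rightarrow> real \<Rightarrow> agent set \<Rightarrow> real \<Rightarrow> 'tr st \<Rightarrow> 'tr st" where
  "exec d_close d_open d_min A ct s =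
     apply_upds (\<Union>a\<in>A. if consistent (module_upds d_close d_open d_min a ct s)
                        then module_upds d_close d_open d_min a ct s else {}) s"

definition enabled :: "real \<Rightarrow> real \<Rightarrow> real \<Rightarrow> agent \<Rightarrow> real \<Rightarrow> 'tr st \<Rightarrow> bool" where
  "enabled d_close d_open d_min a ct s \<longleftrightarrow>
     consistent (module_upds d_close d_open d_min a ct s) \<and>
     (\<exists>u\<in>module_upds d_close d_open d_min a ct s. changes s u)"

text \<open>A run is rho : [0,\<infinity>) \<rightarrow> CT-free states; CT = t in R(t) is implicit.\<close>

definition prerun :: "(real \<Rightarrow> 'tr st) \<Rightarrow> bool" where
  "prerun R \<longleftrightarrow> (\<forall>\<tau>>0. \<exists>(n::nat) (ts::nat \<Rightarrow> real).
      ts 0 = 0 \<and> ts n = \<tau> \<and> (\<forall>i<n. ts i < ts (Suc i)) \<and>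
      (\<forall>i<n. \<forall>u v. ts i < u \<and> u < ts (Suc i) \<and> ts i < v \<and> v < ts (Suc i) \<longrightarrow> R u = R v))"

definition rlim :: "(real \<Rightarrow> 'tr st) \<Rightarrow> real \<Rightarrow> 'tr st" where
  "rlim R t = (THE s. \<exists>e>0. \<forall>u. t < u \<and> u < t + e \<longrightarrow> R u = s)"

definition llim :: "(real \<Rightarrow> 'tr st) \<Rightarrow> real \<Rightarrow> 'tr st" where
  "llim R t = (THE s. \<exists>e>0. \<forall>u. t - e < u \<and> u < t \<longrightarrow> R u = s)"

definition is_run :: "real \<Rightarrow> real \<Rightarrow> real \<Rightarrow> (real \<Rightarrow> 'tr st) \<Rightarrow> bool" where
  "is_run d_close d_open d_min R \<longleftrightarrow> prerun R \<and>
     (\<forall>t\<ge>0. rlim R t \<noteq> R t \<longrightarrow>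
        (\<exists>A. rlim R t = exec d_close d_open d_min A t (R t)) \<and> TS (rlim R t) = TS (R t)) \<and>
     (\<forall>t>0. llim R t \<noteq> R t \<longrightarrow>
        DL (llim R t) = DL (R t) \<and> Dir (llim R t) = Dir (R t) \<and> Gate (llim R t) = Gate (R t))"

definition fires :: "real \<Rightarrow> real \<Rightarrow> real \<Rightarrow> agent \<Rightarrow> (real \<Rightarrow> 'tr st) \<Rightarrow> real \<Rightarrow> bool" where
  "fires d_close d_open d_min a R t \<longleftrightarrow> rlim R t \<noteq> R t \<and>
     (\<exists>A. a \<in> A \<and> rlim R t = exec d_close d_open d_min A t (R t))"

definition immediate :: "real \<Rightarrow> real \<Rightarrow> real \<Rightarrow> agent \<Rightarrow> (real \<Rightarrow> 'tr st) \<Rightarrow> bool" where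
  "immediate d_close d_open d_min a R \<longleftrightarrow>
     (\<forall>t\<ge>0. enabled d_close d_open d_min a t (R t) \<longrightarrow> fires d_close d_open d_min a R t)"

definition bounded :: "real \<Rightarrow> real \<Rightarrow> real \<Rightarrow> agent \<Rightarrow> (real \<Rightarrow> 'tr st) \<Rightarrow> bool" where
  "bounded d_close d_open d_min a R \<longleftrightarrow> immediate d_close d_open d_min a R \<or>
     (\<exists>b>0. \<not> (\<exists>t\<ge>0. (\<forall>s. t < s \<and> s < t + b \<longrightarrow>
                 enabled d_close d_open d_min a s (R s) \<and> \<not> fires d_close d_open d_min a R s)))"

definition initial :: "'tr st \<Rightarrow> bool" where
  "initial s \<longleftrightarrow> (\<forall>x. TS s x = Empty \<and> DL s x = \<infinity>)"

definition motion_block :: "real \<Rightarrow> real \<Rightarrow> (real \<Rightarrow> 'tr st) \<Rightarrow> 'tr \<Rightarrow> (nat \<Rightarrow> real) \<Rightarrow> nat \<Rightarrow> bool" where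
  "motion_block d_min d_max R x ts i \<longleftrightarrow>
     (\<forall>t. ts (3*i) \<le> t \<and> t < ts (3*i+1) \<longrightarrow> TS (R t) x = Empty) \<and>
     (\<forall>t. ts (3*i+1) \<le> t \<and> t < ts (3*i+2) \<longrightarrow> TS (R t) x = Coming) \<and>
     d_min \<le> ts (3*i+2) - ts (3*i+1) \<and> ts (3*i+2) - ts (3*i+1) \<le> d_max \<and>
     (\<forall>t. ts (3*i+2) \<le> t \<and> t < ts (3*i+3) \<longrightarrow> TS (R t) x = Incrossing)"

definition train_motion :: "real \<Rightarrow> real \<Rightarrow> (real \<Rightarrow> 'tr st) \<Rightarrow> 'tr \<Rightarrow> bool" where
  "train_motion d_min d_max R x \<longleftrightarrow> (\<exists>ts::nat \<Rightarrow> real. ts 0 = 0 \<and>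
     ((strict_mono ts \<and> (\<forall>i. motion_block d_min d_max R x ts i)) \<or>
      (\<exists>k. 3 dvd k \<and> (\<forall>i<k. ts i < ts (Suc i)) \<and>
           (\<forall>i. 3*i+3 \<le> k \<longrightarrow> motion_block d_min d_max R x ts i) \<and>
           (\<forall>t\<ge>ts k. TS (R t) x = Empty))))"

definition regular_run :: "real \<Rightarrow> real \<Rightarrow> real \<Rightarrow> real \<Rightarrow> (real \<Rightarrow> 'tr st) \<Rightarrow> bool" where
  "regular_run d_close d_open d_min d_max R \<longleftrightarrow>
     is_run d_close d_open d_min R \<and> initial (R 0) \<and>
     (\<forall>x. train_motion d_min d_max R x) \<and>
     immediate d_close d_open d_min ControllerA R \<and>
     bounded d_close d_open d_min GateA R \<and>
     \<not> (\<exists>t\<ge>0. \<forall>s. t < s \<and> s < t + d_close \<longrightarrow> Dir (R s) = DClose \<and> Gate (R s) = Opened) \<and>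
     \<not> (\<exists>t\<ge>0. \<forall>s. t < s \<and> s < t + d_open \<longrightarrow> Dir (R s) = DOpen \<and> Gate (R s) = Closed)"

definition Delta_close :: "real \<Rightarrow> real \<Rightarrow> real \<Rightarrow> real" where
  "Delta_close d_close d_min d_max = d_close + (d_max - d_min)"

end

theory Submission
  imports Defs
begin

(* Both parts are witnessed by a run with a single train. It approaches at time a, the
   Controller sets the deadline a + W and signals close exactly then, the Gate is lowered
   at some moment of the allowed window of length d_close after that, the train crosses,
   the Controller signals open as soon as the track is empty, and the Gate is raised at
   some moment of the allowed window of length d_open after that.
   (1) Raising the gate late, it is still closed c < d_open after the train has left.
   (2) For the slowest train (entry at a + d_max) and a gate lowered epsilon after the
   deadline, the gate is closed Delta_close - epsilon before the train enters. *)

lemma strict_sorted_nth_gap: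
  fixes xs :: "'a::linorder list"
  assumes "sorted_wrt (<) xs" "Suc i < length xs" "xs ! i < x" "x < xs ! Suc i"
  shows "x \<notin> set xs"
proof
  assume "x \<in> set xs"
  then obtain m where m: "m < length xs" "xs ! m = x" by (metis in_set_conv_nth)
  have sorted: "sorted xs" using assms(1) by (rule strict_sorted_imp_sorted)
  show False
  proof (cases "m \<le> i")
    case True
    then have "xs ! m \<le> xs ! i" using sorted assms(2) by (simp add: sorted_nth_mono)
    then show False using m assms(3) by simp
  next
    case False
    then have "xs ! Suc i \<le> xs ! m" using sorted m(1) by (simp add: sorted_nth_mono)
    then show False using m assms(4) by simp
  qed
qed

lemma finite_avoiding_partition:
  fixes P :: "real set"
  assumes "finite P" "0 < \<tau>"
  obtains n ts where "ts 0 = 0" "ts n = \<tau>" "\<forall>i<n. ts i < ts (Suc i)"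
    "\<forall>i<n. {ts i<..<ts (Suc i)} \<inter> P = {}"
proof -
  define S where "S = {0, \<tau>} \<union> {p \<in> P. 0 < p \<and> p < \<tau>}"
  define ts where "ts = sorted_list_of_set S"
  define n where "n = length ts - 1"
  have "finite S" using \<open>finite P\<close> by (simp add: S_def)
  then have set_ts: "set ts = S" and strict: "sorted_wrt (<) ts"
    by (simp_all add: ts_def)
  have S_bounds: "\<And>x. x \<in> S \<Longrightarrow> 0 \<le> x \<and> x \<le> \<tau>" using \<open>0 < \<tau>\<close> by (auto simp: S_def)
  have len: "n < length ts" using set_ts by (cases ts) (auto simp: n_def S_def)
  have nth_in: "\<And>i. i < length ts \<Longrightarrow> ts ! i \<in> S" using set_ts nth_mem by blast
  have mono: "\<And>i j. i \<le> j \<Longrightarrow> j < length ts \<Longrightarrow> ts ! i \<le> ts ! j"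
    using strict by (simp add: sorted_nth_mono strict_sorted_imp_sorted)
  obtain j where "j < length ts" "ts ! j = 0"
    using set_ts by (metis in_set_conv_nth S_def insertI1 UnI1)
  then have first: "ts ! 0 = 0" using mono[of 0 j] S_bounds[OF nth_in[of 0]] by force
  obtain k where "k < length ts" "ts ! k = \<tau>"
    using set_ts by (metis in_set_conv_nth S_def insertI1 insertI2 UnI1)
  then have last: "ts ! n = \<tau>"
    using mono[of k n] S_bounds[OF nth_in[of n]] len by (force simp: n_def)
  have "ts ! i < ts ! Suc i \<and> {ts ! i<..<ts ! Suc i} \<inter> P = {}" if "i < n" for i
  proof
    have i: "Suc i < length ts" using \<open>i < n\<close> len by (simp add: n_def)
    then show "ts ! i < ts ! Suc i" using strict by (simp add: sorted_wrt_nth_less)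
    have "0 \<le> ts ! i" "ts ! Suc i \<le> \<tau>" using S_bounds nth_in i by auto
    then have "{ts ! i<..<ts ! Suc i} \<inter> P \<subseteq> set ts" by (auto simp: set_ts S_def)
    then show "{ts ! i<..<ts ! Suc i} \<inter> P = {}" using strict_sorted_nth_gap[OF strict i] by auto
  qed
  then show thesis using that[of "(!) ts" n] first last by blast
qed

lemma prerun_if_locally_constant:
  fixes R :: "real \<Rightarrow> 'tr st"
  assumes "finite P"
    and const: "\<And>u v. 0 < u \<Longrightarrow> u \<le> v \<Longrightarrow> {u..v} \<inter> P = {} \<Longrightarrow> R u = R v"
  shows "prerun R"
  unfolding prerun_def
proof (intro allI impI)
  fix \<tau> :: real assume "0 < \<tau>"
  then obtain n ts where ts: "ts 0 = 0" "ts n = \<tau>" "\<forall>i<n. ts i < ts (Suc i)"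
    and gaps: "\<forall>i<n. {ts i<..<ts (Suc i)} \<inter> P = {}"
    using finite_avoiding_partition[OF \<open>finite P\<close>] by metis
  have nonneg: "0 \<le> ts i" if "i \<le> n" for i
    using that
  proof (induction i)
    case (Suc i)
    then show ?case using ts(3) by (metis Suc_leD Suc_le_lessD order.strict_trans1 less_imp_le)
  qed (simp add: ts(1))
  have "R u = R v"
    if "i < n" "ts i < u" "u \<le> v" "v < ts (Suc i)" for i u v
  proof (rule const)
    show "0 < u" using nonneg[of i] that by simp
    have "{u..v} \<subseteq> {ts i<..<ts (Suc i)}" using that by auto
    then show "{u..v} \<inter> P = {}" using gaps \<open>i < n\<close> by blast
  qed (fact \<open>u \<le> v\<close>)
  then have "R u = R v"
    if "i < n" "ts i < u" "u < ts (Suc i)" "ts i < v" "v < ts (Suc i)" for i u v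
    using that by (metis linorder_linear)
  then show "\<exists>n ts. ts 0 = 0 \<and> ts n = \<tau> \<and> (\<forall>i<n. ts i < ts (Suc i)) \<and>
      (\<forall>i<n. \<forall>u v. ts i < u \<and> u < ts (Suc i) \<and> ts i < v \<and> v < ts (Suc i) \<longrightarrow> R u = R v)"
    using ts by blast
qed

lemma finite_gap_right:
  fixes P :: "real set"
  assumes "finite P"
  shows "\<exists>e>0. P \<inter> {t<..<t + e} = {}"
  using assms
proof (induction P rule: finite_induct)
  case empty then show ?case using zero_less_one by blast
next
  case (insert p P)
  then obtain e where "e > 0" "P \<inter> {t<..<t + e} = {}" by blast
  then show ?case
    by (intro exI[of _ "if p \<le> t then e else min e (p - t)"]) (auto simp: disjoint_iff split: if_splits)
qed

lemma finite_gap_left: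
  fixes P :: "real set"
  assumes "finite P"
  shows "\<exists>e>0. P \<inter> {t - e<..<t} = {}"
  using assms
proof (induction P rule: finite_induct)
  case empty then show ?case using zero_less_one by blast
next
  case (insert p P)
  then obtain e where "e > 0" "P \<inter> {t - e<..<t} = {}" by blast
  then show ?case
    by (intro exI[of _ "if t \<le> p then e else min e (t - p)"]) (auto simp: disjoint_iff split: if_splits)
qed

lemma rlim_eqI:
  assumes "e > 0" "\<And>u. t < u \<Longrightarrow> u < t + e \<Longrightarrow> R u = s"
  shows "rlim R t = s"
  unfolding rlim_def
proof (rule the_equality)
  show "\<exists>e>0. \<forall>u. t < u \<and> u < t + e \<longrightarrow> R u = s" using assms by blast
next
  fix s' assume "\<exists>e>0. \<forall>u. t < u \<and> u < t + e \<longrightarrow> R u = s'"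
  then obtain e' where "e' > 0" "\<forall>u. t < u \<and> u < t + e' \<longrightarrow> R u = s'" by blast
  moreover have "t < t + min e e' / 2" "t + min e e' / 2 < t + e" "t + min e e' / 2 < t + e'"
    using \<open>e > 0\<close> \<open>e' > 0\<close> by auto
  ultimately show "s' = s" using assms(2) by metis
qed

lemma llim_eqI:
  assumes "e > 0" "\<And>u. t - e < u \<Longrightarrow> u < t \<Longrightarrow> R u = s"
  shows "llim R t = s"
  unfolding llim_def
proof (rule the_equality)
  show "\<exists>e>0. \<forall>u. t - e < u \<and> u < t \<longrightarrow> R u = s" using assms by blast
next
  fix s' assume "\<exists>e>0. \<forall>u. t - e < u \<and> u < t \<longrightarrow> R u = s'"
  then obtain e' where "e' > 0" "\<forall>u. t - e' < u \<and> u < t \<longrightarrow> R u = s'" by blast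
  moreover have "t - e < t - min e e' / 2" "t - min e e' / 2 < t" "t - e' < t - min e e' / 2"
    using \<open>e > 0\<close> \<open>e' > 0\<close> by (auto simp: min_def)
  ultimately show "s' = s" using assms(2) by metis
qed

lemma interval_mem_right_of:
  fixes t u p q :: real
  assumes "t < u" "p \<notin> {t<..u}" "q \<notin> {t<..u}"
  shows "u \<in> {p..<q} \<longleftrightarrow> t \<in> {p..<q}" "u \<in> {p<..q} \<longleftrightarrow> t \<in> {p..<q}"
  using assms by auto

lemma interval_mem_left_of:
  fixes t u p q :: real
  assumes "u < t" "p \<notin> {u..<t}" "q \<notin> {u..<t}"
  shows "u \<in> {p..<q} \<longleftrightarrow> t \<in> {p<..q}" "u \<in> {p<..q} \<longleftrightarrow> t \<in> {p<..q}"
  using assms by auto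

lemma interval_mem_between:
  fixes u v p q :: real
  assumes "u \<le> v" "p \<notin> {u..v}" "q \<notin> {u..v}"
  shows "u \<in> {p..<q} \<longleftrightarrow> v \<in> {p..<q}" "u \<in> {p<..q} \<longleftrightarrow> v \<in> {p<..q}"
  using assms by auto

locale single_train_run =
  fixes d_close d_open d_min d_max arrival lowered entry departure raised :: real
  assumes arrival_pos: "0 < arrival"
    and close_before_min: "d_close < d_min"
    and approach_min: "d_min \<le> entry - arrival" and approach_max: "entry - arrival \<le> d_max"
    and lowered_after: "arrival + (d_min - d_close) < lowered"
    and lowered_before: "lowered < arrival + d_min"
    and entry_departure: "entry < departure"
    and raised_after: "departure < raised" and raised_before: "raised < departure + d_open"
begin

definition deadline :: real where
  "deadline = arrival + (d_min - d_close)"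

abbreviation breakpoints :: "real set" where
  "breakpoints \<equiv> {arrival, deadline, lowered, entry, departure, raised}"

lemma breakpoints_ordered:
  "0 < arrival" "arrival < deadline" "deadline < lowered" "lowered < entry"
  "entry < departure" "departure < raised"
  using arrival_pos close_before_min approach_min lowered_after lowered_before entry_departure
    raised_after by (auto simp: deadline_def)

(* Each function of the run changes value at one of the breakpoints. The external TrackStatus
   takes its new value at the breakpoint itself, the internal functions only right after it,
   as the result of the modules firing there; hence the run is snapshot {p..<q} {p<..q},
   and its one-sided limits are obtained by using one interval convention throughout. *)
definition snapshot ::
    "(real \<Rightarrow> real \<Rightarrow> real set) \<Rightarrow> (real \<Rightarrow> real \<Rightarrow> real set) \<Rightarrow> real \<Rightarrow> unit st" where
  "snapshot I J t =
     \<lparr>TS = (\<lambda>_. if t \<in> I arrival entry then Coming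
                 else if t \<in> I entry departure then Incrossing else Empty),
      DL = (\<lambda>_. if t \<in> J arrival departure then ereal deadline else \<infinity>),
      Dir = (if t \<in> J deadline departure then DClose else DOpen),
      Gate = (if t \<in> J lowered raised then Closed else Opened)\<rparr>"

definition run :: "real \<Rightarrow> unit st" where
  "run = snapshot atLeastLessThan greaterThanAtMost"

lemma rlim_run: "rlim run t = snapshot atLeastLessThan atLeastLessThan t"
proof -
  obtain e where "e > 0" and gap: "breakpoints \<inter> {t<..<t + e} = {}"
    using finite_gap_right[of breakpoints] by auto
  from \<open>e > 0\<close> show ?thesis
  proof (rule rlim_eqI)
    fix u assume "t < u" "u < t + e"
    then have "\<forall>p\<in>breakpoints. p \<notin> {t<..u}" using gap by auto
    then show "run u = snapshot atLeastLessThan atLeastLessThan t"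
      by (simp add: run_def snapshot_def interval_mem_right_of[OF \<open>t < u\<close>]
               del: greaterThanAtMost_iff atLeastLessThan_iff)
  qed
qed

lemma llim_run: "llim run t = snapshot greaterThanAtMost greaterThanAtMost t"
proof -
  obtain e where "e > 0" and gap: "breakpoints \<inter> {t - e<..<t} = {}"
    using finite_gap_left[of breakpoints] by auto
  from \<open>e > 0\<close> show ?thesis
  proof (rule llim_eqI)
    fix u assume "t - e < u" "u < t"
    then have "\<forall>p\<in>breakpoints. p \<notin> {u..<t}" using gap by auto
    then show "run u = snapshot greaterThanAtMost greaterThanAtMost t"
      by (simp add: run_def snapshot_def interval_mem_left_of[OF \<open>u < t\<close>]
               del: atLeastLessThan_iff greaterThanAtMost_iff)
  qed
qed

lemma prerun_run: "prerun run"
proof (rule prerun_if_locally_constant[of breakpoints])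
  fix u v :: real assume "u \<le> v" "{u..v} \<inter> breakpoints = {}"
  then have "\<forall>p\<in>breakpoints. p \<notin> {u..v}" by auto
  then show "run u = run v"
    by (simp add: run_def snapshot_def interval_mem_between[OF \<open>u \<le> v\<close>]
             del: atLeastLessThan_iff greaterThanAtMost_iff atLeastAtMost_iff)
qed simp

lemma d_open_pos: "0 < d_open"
  using raised_after raised_before by simp

lemma controller_upds_run:
  "controller_upds d_close d_open d_min t (run t) =
     (if t = arrival then {UDL () (ereal deadline)} else {})
     \<union> (if t = deadline then {UDir DClose} else {})
     \<union> (if t = departure then {UDL () \<infinity>, UDir DOpen} else {})"
  using breakpoints_ordered d_open_pos
  unfolding controller_upds_def run_def snapshot_def safe_to_open_def
  by (auto simp: deadline_def not_less)

lemma gate_upds_run: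
  "gate_upds (run t) = {UGate (if t \<in> {deadline<..departure} then Closed else Opened)}"
  unfolding gate_upds_def run_def snapshot_def by auto

definition firing :: "real \<Rightarrow> agent set" where
  "firing t = insert ControllerA (if t = lowered \<or> t = raised then {GateA} else {})"

lemma exec_run:
  "exec d_close d_open d_min (firing t) t (run t) = snapshot atLeastLessThan atLeastLessThan t"
proof -
  have "consistent (module_upds d_close d_open d_min a t (run t))" for a
    using breakpoints_ordered
    by (cases a) (auto simp: module_upds_def controller_upds_run gate_upds_run consistent_def)
  then have "exec d_close d_open d_min (firing t) t (run t) = apply_upds
     ((if t = arrival then {UDL () (ereal deadline)} else {})
     \<union> (if t = deadline then {UDir DClose} else {})
     \<union> (if t = departure then {UDL () \<infinity>, UDir DOpen} else {})
     \<union> (if t = lowered then {UGate Closed} else {})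
     \<union> (if t = raised then {UGate Opened} else {})) (run t)"
    using breakpoints_ordered
    by (auto simp: exec_def firing_def module_upds_def controller_upds_run gate_upds_run
             intro!: arg_cong2[where f = apply_upds])
  also have "\<dots> = snapshot atLeastLessThan atLeastLessThan t"
    using breakpoints_ordered
    by (auto simp: apply_upds_def run_def snapshot_def fun_eq_iff)
  finally show ?thesis .
qed

lemma is_run_run: "is_run d_close d_open d_min run"
  unfolding is_run_def
proof (intro conjI allI impI)
  show "prerun run" by (rule prerun_run)
  fix t :: real
  show "\<exists>A. rlim run t = exec d_close d_open d_min A t (run t)"
    using exec_run rlim_run by metis
  show "TS (rlim run t) = TS (run t)" "DL (llim run t) = DL (run t)"
    "Dir (llim run t) = Dir (run t)" "Gate (llim run t) = Gate (run t)"
    unfolding rlim_run llim_run by (simp_all add: run_def snapshot_def)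
qed

lemma controller_immediate: "immediate d_close d_open d_min ControllerA run"
  unfolding immediate_def
proof (intro allI impI)
  fix t :: real assume "enabled d_close d_open d_min ControllerA t (run t)"
  then have "t \<in> {arrival, deadline, departure}"
    by (auto simp: enabled_def module_upds_def controller_upds_run split: if_splits)
  then have "rlim run t \<noteq> run t"
    unfolding rlim_run using breakpoints_ordered by (auto simp: run_def snapshot_def fun_eq_iff)
  moreover have "ControllerA \<in> firing t" by (simp add: firing_def)
  ultimately show "fires d_close d_open d_min ControllerA run t"
    unfolding fires_def rlim_run using exec_run by metis
qed

lemma gate_bounded: "bounded d_close d_open d_min GateA run"
  unfolding bounded_def
proof (intro disjI2 exI[of _ "raised + 1"] conjI notI)
  show "0 < raised + 1" using breakpoints_ordered by simp
  assume "\<exists>t\<ge>0. \<forall>s. t < s \<and> s < t + (raised + 1) \<longrightarrow>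
     enabled d_close d_open d_min GateA s (run s) \<and> \<not> fires d_close d_open d_min GateA run s"
  then obtain t where "t \<ge> 0"
    and enabled: "\<And>s. t < s \<Longrightarrow> s < t + (raised + 1) \<Longrightarrow> enabled d_close d_open d_min GateA s (run s)"
    by blast
  define s where "s = max t raised + 1/2"
  have "enabled d_close d_open d_min GateA s (run s)"
    using \<open>t \<ge> 0\<close> breakpoints_ordered by (intro enabled) (auto simp: s_def)
  moreover have "raised < s" by (simp add: s_def)
  ultimately show False
    using breakpoints_ordered
    by (auto simp: enabled_def module_upds_def gate_upds_def changes_def run_def snapshot_def)
qed

lemma gate_closing_in_time:
  "\<not> (\<exists>t\<ge>0. \<forall>s. t < s \<and> s < t + d_close \<longrightarrow> Dir (run s) = DClose \<and> Gate (run s) = Opened)"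
proof
  assume "\<exists>t\<ge>0. \<forall>s. t < s \<and> s < t + d_close \<longrightarrow> Dir (run s) = DClose \<and> Gate (run s) = Opened"
  then obtain t where "{t<..<t + d_close} \<subseteq> {deadline<..lowered}"
    using breakpoints_ordered by (fastforce simp: run_def snapshot_def split: if_splits)
  then show False
    using close_before_min lowered_before breakpoints_ordered
    by (simp add: greaterThanLessThan_subseteq_greaterThanAtMost_iff deadline_def)
qed

lemma gate_opening_in_time:
  "\<not> (\<exists>t\<ge>0. \<forall>s. t < s \<and> s < t + d_open \<longrightarrow> Dir (run s) = DOpen \<and> Gate (run s) = Closed)"
proof
  assume "\<exists>t\<ge>0. \<forall>s. t < s \<and> s < t + d_open \<longrightarrow> Dir (run s) = DOpen \<and> Gate (run s) = Closed"
  then obtain t where "{t<..<t + d_open} \<subseteq> {departure<..raised}"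
    using breakpoints_ordered by (fastforce simp: run_def snapshot_def split: if_splits)
  then show False
    using raised_before d_open_pos
    by (simp add: greaterThanLessThan_subseteq_greaterThanAtMost_iff)
qed

lemma train_motion_run: "train_motion d_min d_max run x"
  unfolding train_motion_def
proof (intro exI[of _ "\<lambda>i. [0, arrival, entry, departure] ! i"] conjI disjI2 exI[of _ 3])
  show "\<forall>i<3. [0, arrival, entry, departure] ! i < [0, arrival, entry, departure] ! Suc i"
    using breakpoints_ordered by (auto simp: less_Suc_eq numeral_3_eq_3)
  show "\<forall>i. 3 * i + 3 \<le> 3 \<longrightarrow> motion_block d_min d_max run x (\<lambda>i. [0, arrival, entry, departure] ! i) i"
    using approach_min approach_max breakpoints_ordered
    by (auto simp: motion_block_def run_def snapshot_def)
  show "\<forall>t\<ge>[0, arrival, entry, departure] ! 3. TS (run t) x = Empty"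
    using breakpoints_ordered by (auto simp: run_def snapshot_def numeral_3_eq_3)
qed simp_all

lemma regular_run: "regular_run d_close d_open d_min d_max run"
  unfolding regular_run_def
  using is_run_run train_motion_run controller_immediate gate_bounded
    gate_closing_in_time gate_opening_in_time breakpoints_ordered
  by (auto simp: initial_def run_def snapshot_def)

lemma gate_closed_run: "t \<in> {lowered<..raised} \<Longrightarrow> Gate (run t) \<noteq> Opened"
  by (simp add: run_def snapshot_def)

lemma not_incrossing_run: "t \<notin> {entry..<departure} \<Longrightarrow> TS (run t) x \<noteq> Incrossing"
  by (simp add: run_def snapshot_def)

end

lemma gate_may_stay_closed_after_crossing:
  fixes d_close d_open d_min d_max c :: real
  assumes "0 < d_close" "d_close < d_min" "d_min \<le> d_max" "0 \<le> c" "c < d_open"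
  shows "\<exists>R :: real \<Rightarrow> unit st. regular_run d_close d_open d_min d_max R \<and>
           (\<exists>\<alpha> \<beta>. 0 \<le> \<alpha> \<and> \<alpha> < \<beta> \<and> \<alpha> + c < \<beta> - Delta_close d_close d_min d_max \<and>
              (\<forall>t x. \<alpha> < t \<and> t < \<beta> \<longrightarrow> TS (R t) x \<noteq> Incrossing) \<and>
              (\<exists>t. \<alpha> + c \<le> t \<and> t \<le> \<beta> - Delta_close d_close d_min d_max \<and> Gate (R t) \<noteq> Opened))"
proof -
  define departure where "departure = d_min + 2"
  interpret single_train_run d_close d_open d_min d_max 1 "1 + d_min - d_close / 2" "1 + d_min"
      departure "departure + (c + d_open) / 2"
    using assms by unfold_locales (auto simp: departure_def)
  let ?\<Delta> = "Delta_close d_close d_min d_max"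
  have "0 < ?\<Delta>" using assms by (simp add: Delta_close_def)
  show ?thesis
  proof (intro exI conjI)
    show "regular_run d_close d_open d_min d_max run" by (rule regular_run)
    show "0 \<le> departure" "departure < departure + c + ?\<Delta> + 1"
      using \<open>0 < ?\<Delta>\<close> assms by (auto simp: departure_def)
    show "departure + c < departure + c + ?\<Delta> + 1 - ?\<Delta>" by simp
    show "\<forall>t x. departure < t \<and> t < departure + c + ?\<Delta> + 1 \<longrightarrow> TS (run t) x \<noteq> Incrossing"
      using not_incrossing_run by auto
    show "departure + c \<le> departure + c" "departure + c \<le> departure + c + ?\<Delta> + 1 - ?\<Delta>"
      by simp_all
    show "Gate (run (departure + c)) \<noteq> Opened"
      using assms by (intro gate_closed_run) (auto simp: departure_def)
  qed
qed

lemma gate_may_close_early_before_crossing: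
  fixes d_close d_open d_min d_max C :: real
  assumes "0 < d_close" "d_close < d_min" "d_min \<le> d_max" "0 < d_open"
    and "C < Delta_close d_close d_min d_max"
  shows "\<exists>R :: real \<Rightarrow> unit st. regular_run d_close d_open d_min d_max R \<and>
           (\<exists>\<alpha> \<beta>. 0 \<le> \<alpha> \<and> \<alpha> < \<beta> \<and> \<alpha> + d_open < \<beta> - C \<and>
              (\<forall>t x. \<alpha> < t \<and> t < \<beta> \<longrightarrow> TS (R t) x \<noteq> Incrossing) \<and>
              (\<exists>t. \<alpha> + d_open \<le> t \<and> t \<le> \<beta> - C \<and> Gate (R t) \<noteq> Opened))"
proof -
  define arrival where "arrival = d_open + \<bar>C\<bar> + 1"
  define entry where "entry = arrival + d_max"
  define e where "e = min d_close (Delta_close d_close d_min d_max - C) / 2"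
  have e: "0 < e" "e < d_close" "e < Delta_close d_close d_min d_max - C"
    using assms by (auto simp: e_def min_def)
  interpret single_train_run d_close d_open d_min d_max arrival "arrival + (d_min - d_close) + e"
      entry "entry + \<bar>C\<bar> + 1" "entry + \<bar>C\<bar> + 1 + d_open / 2"
    using assms e by unfold_locales (auto simp: arrival_def entry_def)
  show ?thesis
  proof (intro exI conjI)
    show "regular_run d_close d_open d_min d_max run" by (rule regular_run)
    show "0 \<le> (0::real)" "0 < entry" "0 + d_open < entry - C" "0 + d_open \<le> entry - C"
      using assms by (auto simp: arrival_def entry_def)
    show "\<forall>t x. 0 < t \<and> t < entry \<longrightarrow> TS (run t) x \<noteq> Incrossing"
      using not_incrossing_run by auto
    show "entry - C \<le> entry - C" by simp
    show "Gate (run (entry - C)) \<noteq> Opened"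
      using assms e by (intro gate_closed_run) (auto simp: entry_def Delta_close_def)
  qed
qed

theorem mainTheorem11:
  fixes d_close d_open d_min d_max :: real
  assumes "0 < d_close" and "d_close < d_min" and "d_min \<le> d_max" and "0 < d_open"
  shows "(\<forall>c. 0 \<le> c \<and> c < d_open \<longrightarrow>
            (\<exists>R :: real \<Rightarrow> unit st. regular_run d_close d_open d_min d_max R \<and>
              (\<exists>\<alpha> \<beta>. 0 \<le> \<alpha> \<and> \<alpha> < \<beta> \<and> \<alpha> + c < \<beta> - Delta_close d_close d_min d_max \<and>
                 (\<forall>t x. \<alpha> < t \<and> t < \<beta> \<longrightarrow> TS (R t) x \<noteq> Incrossing) \<and>
                 (\<exists>t. \<alpha> + c \<le> t \<and> t \<le> \<beta> - Delta_close d_close d_min d_max \<and> Gate (R t) \<noteq> Opened))))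
       \<and> (\<forall>C. C < Delta_close d_close d_min d_max \<longrightarrow>
            (\<exists>R :: real \<Rightarrow> unit st. regular_run d_close d_open d_min d_max R \<and>
              (\<exists>\<alpha> \<beta>. 0 \<le> \<alpha> \<and> \<alpha> < \<beta> \<and> \<alpha> + d_open < \<beta> - C \<and>
                 (\<forall>t x. \<alpha> < t \<and> t < \<beta> \<longrightarrow> TS (R t) x \<noteq> Incrossing) \<and>
                 (\<exists>t. \<alpha> + d_open \<le> t \<and> t \<le> \<beta> - C \<and> Gate (R t) \<noteq> Opened))))"
  using gate_may_stay_closed_after_crossing[OF assms(1-3)]
    gate_may_close_early_before_crossing[OF assms]
  by blast

end
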